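(* In the Setting below, $U$ is a commutative associative subalgebra of $\Gamma(\mathcal M)$ (under composition), and the linear map $L\otimes_{\mathbb F}U\to N_{\mathcal M}$, $a\otimes\alpha\mapsto a\alpha$, is an isomorphism of algebras, where $L\otimes_{\mathbb F}U$ carries the product $(a\otimes\alpha)(b\otimes\beta)=ab\otimes\alpha\beta$. In particular $N_{\mathcal M}\cong L\otimes_{\mathbb F}U\cong\mathfrak{sl}_2(U)$.
   Context: Setting. Let $\mathbb F$ be a field of characteristic different from $2$ and $3$. A Malcev algebra is an anticommutative algebra $\mathcal M$ over $\mathbb F$ satisfying $(xz)(yt)=((xy)z)t+((yz)t)x+((zt)x)y+((tx)y)z$. Products are left-normed: $xyz=(xy)z$, $xyzt=((xy)z)t$. Put $J(x,y,z)=xyz+yzx+zxy$ (the Jacobian), $\{x,y,z\}=xyz-xzy+2x(yz)$, and $h(y,z,t,x,u)=\{yz,t,u\}x+\{yz,t,x\}u+\{yx,z,u\}t+\{yu,z,x\}t$. The variety $\mathcal H$ consists of the Malcev algebras satisfying $h(y,z,t,x,u)=0$ identically. The centroid $\Gamma(\mathcal M)$ is the set of linear maps $\alpha$ of $\mathcal M$ (written on the right) with $(xy)\alpha=x(y\alpha)=(x\alpha)y$ for all $x,y$. Put $p(x,y,z,t)=-\{zt,x,y\}-\{yt,z,x\}+\{xt,y,z\}$ and define the operator $\alpha(y,z,t)$ by $x\,\alpha(y,z,t)=p(x,y,z,t)$; for $\mathcal M\in\mathcal H$ these operators lie in $\Gamma(\mathcal M)$. Let $L=\mathfrak{sl}_2(\mathbb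 F)$ with basis $E,H,F$ and products $EH=E$, $FH=-F$, $EF=\tfrac12 H$. Standing assumption: $\mathcal M\in\mathcal H$ contains $L$ as a subalgebra and $mL\neq 0$ for every $0\neq m\in\mathcal M$. Define $N_{\mathcal M}=\{m\in\mathcal M: J(m,a,b)=0\ \forall a,b\in L\}$ and $J_{\mathcal M}=\{m\in\mathcal M:\{m,a,b\}=0\ \forall a,b\in L\}$. Known facts (from prior work): $\mathcal M=N_{\mathcal M}\oplus J_{\mathcal M}$; $J_{\mathcal M}$ is a direct sum of $L$-submodules $V_{2i}$, each with a basis $\{u_i,v_i\}$ satisfying $u_iH=u_i$, $v_iH=-v_i$, $u_iE=v_i$, $u_iF=0$, $v_iE=0$, $v_iF=-u_i$; and, letting $U$ be the linear span of the operators $\alpha(m,a,b)$ ($m\in\mathcal M$, $a,b\in L$), $U\subseteq\Gamma(\mathcal M)$ and $N_{\mathcal M}=\sum_{\alpha\in U}L\alpha$. *)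

theory Defs
  imports Complex_Main "HOL-Library.Function_Algebras"
begin

text \<open>Products are left-normed.  Linear maps are
  written on the right in the paper: x\<alpha> is rendered as \<alpha> x, and the
  product \<alpha>\<beta> (first \<alpha>, then \<beta>) as \<beta> \<circ> \<alpha>.\<close>

definition bilinear_prod :: "('f::field \<Rightarrow> 'm::ab_group_add \<Rightarrow> 'm) \<Rightarrow> ('m \<Rightarrow> 'm \<Rightarrow> 'm) \<Rightarrow> bool" where
  "bilinear_prod sc mu \<longleftrightarrow>
     (\<forall>x y z. mu (x + y) z = mu x z + mu y z) \<and>
     (\<forall>x y z. mu x (y + z) = mu x y + mu x z) \<and>
     (\<forall>c x y. mu (sc c x) y = sc c (mu x y)) \<and>
     (\<forall>c x y. mu x (sc c y) = sc c (mu x y))"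

definition malcev_algebra :: "('f::field \<Rightarrow> 'm::ab_group_add \<Rightarrow> 'm) \<Rightarrow> ('m \<Rightarrow> 'm \<Rightarrow> 'm) \<Rightarrow> bool" where
  "malcev_algebra sc mu \<longleftrightarrow>
     vector_space sc \<and> bilinear_prod sc mu \<and>
     (\<forall>x. mu x x = 0) \<and>
     (\<forall>x y z t. mu (mu x z) (mu y t) =
        mu (mu (mu x y) z) t + mu (mu (mu y z) t) x + mu (mu (mu z t) x) y + mu (mu (mu t x) y) z)"

definition jac :: "('m::ab_group_add \<Rightarrow> 'm \<Rightarrow> 'm) \<Rightarrow> 'm \<Rightarrow> 'm \<Rightarrow> 'm \<Rightarrow> 'm" where
  "jac mu x y z = mu (mu x y) z + mu (mu y z) x + mu (mu z x) y"

definition trip :: "('f::field \<Rightarrow> 'm::ab_group_add \<Rightarrow> 'm) \<Rightarrow> ('m \<Rightarrow> 'm \<Rightarrow> 'm) \<Rightarrow> 'm \<Rightarrow> 'm \<Rightarrow> 'm \<Rightarrow> 'm" where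
  "trip sc mu x y z = mu (mu x y) z - mu (mu x z) y + sc 2 (mu x (mu y z))"

definition hpoly :: "('f::field \<Rightarrow> 'm::ab_group_add \<Rightarrow> 'm) \<Rightarrow> ('m \<Rightarrow> 'm \<Rightarrow> 'm) \<Rightarrow> 'm \<Rightarrow> 'm \<Rightarrow> 'm \<Rightarrow> 'm \<Rightarrow> 'm \<Rightarrow> 'm" where
  "hpoly sc mu y z t x u =
     mu (trip sc mu (mu y z) t u) x + mu (trip sc mu (mu y z) t x) u +
     mu (trip sc mu (mu y x) z u) t + mu (trip sc mu (mu y u) z x) t"

definition in_H :: "('f::field \<Rightarrow> 'm::ab_group_add \<Rightarrow> 'm) \<Rightarrow> ('m \<Rightarrow> 'm \<Rightarrow> 'm) \<Rightarrow> bool" where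
  "in_H sc mu \<longleftrightarrow> malcev_algebra sc mu \<and> (\<forall>y z t x u. hpoly sc mu y z t x u = 0)"

definition centroid :: "('f::field \<Rightarrow> 'm::ab_group_add \<Rightarrow> 'm) \<Rightarrow> ('m \<Rightarrow> 'm \<Rightarrow> 'm) \<Rightarrow> ('m \<Rightarrow> 'm) set" where
  "centroid sc mu = {\<alpha>. Vector_Spaces.linear sc sc \<alpha> \<and>
      (\<forall>x y. \<alpha> (mu x y) = mu x (\<alpha> y) \<and> \<alpha> (mu x y) = mu (\<alpha> x) y)}"

definition ppoly :: "('f::field \<Rightarrow> 'm::ab_group_add \<Rightarrow> 'm) \<Rightarrow> ('m \<Rightarrow> 'm \<Rightarrow> 'm) \<Rightarrow> 'm \<Rightarrow> 'm \<Rightarrow> 'm \<Rightarrow> 'm \<Rightarrow> 'm" where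
  "ppoly sc mu x y z t =
     - trip sc mu (mu z t) x y - trip sc mu (mu y t) z x + trip sc mu (mu x t) y z"

definition alpha_op :: "('f::field \<Rightarrow> 'm::ab_group_add \<Rightarrow> 'm) \<Rightarrow> ('m \<Rightarrow> 'm \<Rightarrow> 'm) \<Rightarrow> 'm \<Rightarrow> 'm \<Rightarrow> 'm \<Rightarrow> ('m \<Rightarrow> 'm)" where
  "alpha_op sc mu y z t = (\<lambda>x. ppoly sc mu x y z t)"

definition sl2_span :: "('f::field \<Rightarrow> 'm::ab_group_add \<Rightarrow> 'm) \<Rightarrow> 'm \<Rightarrow> 'm \<Rightarrow> 'm \<Rightarrow> 'm set" where
  "sl2_span sc E H F = module.span sc {E, H, F}"

definition sl2_triple :: "('f::field \<Rightarrow> 'm::ab_group_add \<Rightarrow> 'm) \<Rightarrow> ('m \<Rightarrow> 'm \<Rightarrow> 'm) \<Rightarrow> 'm \<Rightarrow> 'm \<Rightarrow> 'm \<Rightarrow> bool" where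
  "sl2_triple sc mu E H F \<longleftrightarrow>
     E \<noteq> H \<and> E \<noteq> F \<and> H \<noteq> F \<and> \<not> module.dependent sc {E, H, F} \<and>
     mu E H = E \<and> mu F H = - F \<and> mu E F = sc (1/2) H"

definition N_M :: "('f::field \<Rightarrow> 'm::ab_group_add \<Rightarrow> 'm) \<Rightarrow> ('m \<Rightarrow> 'm \<Rightarrow> 'm) \<Rightarrow> 'm set \<Rightarrow> 'm set" where
  "N_M sc mu L = {m. \<forall>a\<in>L. \<forall>b\<in>L. jac mu m a b = 0}"

definition J_M :: "('f::field \<Rightarrow> 'm::ab_group_add \<Rightarrow> 'm) \<Rightarrow> ('m \<Rightarrow> 'm \<Rightarrow> 'm) \<Rightarrow> 'm set \<Rightarrow> 'm set" where
  "J_M sc mu L = {m. \<forall>a\<in>L. \<forall>b\<in>L. trip sc mu m a b = 0}"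

definition op_scale :: "('f::field \<Rightarrow> 'm::ab_group_add \<Rightarrow> 'm) \<Rightarrow> 'f \<Rightarrow> ('m \<Rightarrow> 'm) \<Rightarrow> ('m \<Rightarrow> 'm)" where
  "op_scale sc c f = (\<lambda>x. sc c (f x))"

definition U_ops :: "('f::field \<Rightarrow> 'm::ab_group_add \<Rightarrow> 'm) \<Rightarrow> ('m \<Rightarrow> 'm \<Rightarrow> 'm) \<Rightarrow> 'm set \<Rightarrow> ('m \<Rightarrow> 'm) set" where
  "U_ops sc mu L = module.span (op_scale sc) {alpha_op sc mu m a b | m a b. a \<in> L \<and> b \<in> L}"

end

theory Submission
  imports Defs
begin

text \<open>The operators \<open>\<alpha>(y,z,t)\<close> lie in the centroid because \<open>p(xu,y,z,t) = x p(u,y,z,t)\<close>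
  holds in every Malcev algebra with \<open>h = 0\<close>; this degree-five identity is proved by exhibiting
  it as an explicit integer combination of instances of the Malcev identity and of \<open>h\<close>, checked
  by normalising in the free anticommutative algebra.  A centroid element \<open>\<delta>\<close> satisfies
  \<open>\<delta> \<alpha>(y,z,t) = \<alpha>(\<delta> y,z,t) = \<alpha>(y,z,t) \<delta>\<close>, so \<open>U\<close> is a commutative subalgebra of the centroid.
  Since \<open>M\<close> is faithful over \<open>L\<close>, a centroid element vanishing at one of \<open>E, H, F\<close> vanishes,
  and the eigenvalues \<open>1, 0, -1\<close> of right multiplication by \<open>H\<close> separate \<open>\<alpha> E + \<beta> H + \<gamma> F\<close>,
  which gives injectivity.  For surjectivity, a second certificate, in which the hypotheses
  \<open>J(n,a,b) = 0\<close> replace the Jacobi identity, shows that \<open>6n - X\<close> annihilates \<open>L\<close> for an explicit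
  combination \<open>X\<close> of values \<open>p(a,n,b,c)\<close> with \<open>a, b, c \<in> L\<close>; by faithfulness \<open>6n = X \<in> L U\<close>.\<close>

section \<open>Identities of anticommutative algebras by normalisation\<close>

text \<open>Products are
  always written with the \<open>mon_less\<close>-smaller factor first, so anticommutativity is built into
  \<open>mon_mul\<close>, and a combination that normalises to \<open>[]\<close> evaluates to \<open>0\<close> in every
  anticommutative algebra.\<close>

datatype mon = Var nat | Mul mon mon

fun mon_less :: "mon \<Rightarrow> mon \<Rightarrow> bool" where
  "mon_less (Var i) (Var j) = (i < j)"
| "mon_less (Var i) (Mul a b) = True"
| "mon_less (Mul a b) (Var j) = False"
| "mon_less (Mul a b) (Mul c d) = (mon_less a c \<or> (a = c \<and> mon_less b d))"

type_synonym poly = "(int \<times> mon) list"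

definition mon_mul :: "mon \<Rightarrow> mon \<Rightarrow> poly" where
  "mon_mul a b = (if a = b then [] else if mon_less a b then [(1, Mul a b)] else [(-1, Mul b a)])"

definition poly_smult :: "int \<Rightarrow> poly \<Rightarrow> poly" where
  "poly_smult c xs = map (\<lambda>(d, t). (c * d, t)) xs"

fun poly_mul :: "poly \<Rightarrow> poly \<Rightarrow> poly" where
  "poly_mul [] ys = []"
| "poly_mul ((c, a) # xs) ys =
     concat (map (\<lambda>(d, b). poly_smult (c * d) (mon_mul a b)) ys) @ poly_mul xs ys"

definition poly_lincomb :: "(int \<times> poly) list \<Rightarrow> poly" where
  "poly_lincomb xs = concat (map (\<lambda>(c, p). poly_smult c p) xs)"

fun poly_insert_nonzero :: "int \<times> mon \<Rightarrow> poly \<Rightarrow> poly" where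
  "poly_insert_nonzero p [] = [p]"
| "poly_insert_nonzero (c, t) ((d, s) # r) =
     (if t = s then (if c + d = 0 then r else (c + d, s) # r)
      else if mon_less t s then (c, t) # (d, s) # r
      else (d, s) # poly_insert_nonzero (c, t) r)"

definition poly_insert :: "int \<times> mon \<Rightarrow> poly \<Rightarrow> poly" where
  "poly_insert p xs = (if fst p = 0 then xs else poly_insert_nonzero p xs)"

definition poly_normalize :: "poly \<Rightarrow> poly" where
  "poly_normalize xs = foldr poly_insert xs []"

definition poly_var :: "nat \<Rightarrow> poly" where
  "poly_var i = [(1, Var i)]"

definition poly_trip :: "poly \<Rightarrow> poly \<Rightarrow> poly \<Rightarrow> poly" where
  "poly_trip x y z = poly_mul (poly_mul x y) z @ poly_smult (-1) (poly_mul (poly_mul x z) y)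
     @ poly_smult 2 (poly_mul x (poly_mul y z))"

definition poly_malcev :: "poly \<Rightarrow> poly \<Rightarrow> poly \<Rightarrow> poly \<Rightarrow> poly" where
  "poly_malcev x y z t = poly_mul (poly_mul x z) (poly_mul y t) @ poly_smult (-1)
     (poly_mul (poly_mul (poly_mul x y) z) t @ poly_mul (poly_mul (poly_mul y z) t) x
      @ poly_mul (poly_mul (poly_mul z t) x) y @ poly_mul (poly_mul (poly_mul t x) y) z)"

definition poly_h :: "poly \<Rightarrow> poly \<Rightarrow> poly \<Rightarrow> poly \<Rightarrow> poly \<Rightarrow> poly" where
  "poly_h y z t x u = poly_mul (poly_trip (poly_mul y z) t u) x @ poly_mul (poly_trip (poly_mul y z) t x) u
     @ poly_mul (poly_trip (poly_mul y x) z u) t @ poly_mul (poly_trip (poly_mul y u) z x) t"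

definition poly_p :: "poly \<Rightarrow> poly \<Rightarrow> poly \<Rightarrow> poly \<Rightarrow> poly" where
  "poly_p x y z t = poly_smult (-1) (poly_trip (poly_mul z t) x y) @ poly_smult (-1) (poly_trip (poly_mul y t) z x)
     @ poly_trip (poly_mul x t) y z"

fun mon_eval :: "('m \<Rightarrow> 'm \<Rightarrow> 'm) \<Rightarrow> (nat \<Rightarrow> 'm) \<Rightarrow> mon \<Rightarrow> 'm" where
  "mon_eval mu \<rho> (Var i) = \<rho> i"
| "mon_eval mu \<rho> (Mul a b) = mu (mon_eval mu \<rho> a) (mon_eval mu \<rho> b)"

definition poly_eval ::
  "('f::field \<Rightarrow> 'm::ab_group_add \<Rightarrow> 'm) \<Rightarrow> ('m \<Rightarrow> 'm \<Rightarrow> 'm) \<Rightarrow> (nat \<Rightarrow> 'm) \<Rightarrow> poly \<Rightarrow> 'm" where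
  "poly_eval sc mu \<rho> xs = sum_list (map (\<lambda>(c, t). sc (of_int c) (mon_eval mu \<rho> t)) xs)"

locale anticomm_algebra =
  fixes sc :: "'f::field \<Rightarrow> 'm::ab_group_add \<Rightarrow> 'm" and mu :: "'m \<Rightarrow> 'm \<Rightarrow> 'm"
  assumes is_vector_space: "vector_space sc"
    and mu_add_left: "\<And>x y z. mu (x + y) z = mu x z + mu y z"
    and mu_add_right: "\<And>x y z. mu x (y + z) = mu x y + mu x z"
    and mu_scale_left: "\<And>c x y. mu (sc c x) y = sc c (mu x y)"
    and mu_scale_right: "\<And>c x y. mu x (sc c y) = sc c (mu x y)"
    and mu_self: "\<And>x. mu x x = 0"
begin

sublocale V: vector_space sc by (rule is_vector_space)

lemma mu_zero_left [simp]: "mu 0 x = 0"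
  using mu_add_left[of 0 0 x] by simp

lemma mu_zero_right [simp]: "mu x 0 = 0"
  using mu_add_right[of x 0 0] by simp

lemma mu_minus_left [simp]: "mu (- x) y = - mu x y"
  using mu_add_left[of x "- x" y] by (simp add: eq_neg_iff_add_eq_0 add.commute)

lemma mu_minus_right [simp]: "mu x (- y) = - mu x y"
  using mu_add_right[of x y "- y"] by (simp add: eq_neg_iff_add_eq_0 add.commute)

lemma mu_diff_left [simp]: "mu (x - y) z = mu x z - mu y z"
  by (metis diff_conv_add_uminus mu_add_left mu_minus_left)

lemma mu_anticomm: "mu x y = - mu y x"
proof -
  have "mu (x + y) (x + y) = mu x x + mu y x + (mu x y + mu y y)"
    by (simp only: mu_add_left mu_add_right)
  then have "0 = mu y x + mu x y" by (simp add: mu_self)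
  then show ?thesis by (simp add: eq_neg_iff_add_eq_0 add.commute)
qed

lemma poly_eval_Nil [simp]: "poly_eval sc mu \<rho> [] = 0"
  by (simp add: poly_eval_def)

lemma poly_eval_Cons [simp]:
  "poly_eval sc mu \<rho> ((c, t) # xs) = sc (of_int c) (mon_eval mu \<rho> t) + poly_eval sc mu \<rho> xs"
  by (simp add: poly_eval_def)

lemma poly_eval_append [simp]: "poly_eval sc mu \<rho> (xs @ ys) = poly_eval sc mu \<rho> xs + poly_eval sc mu \<rho> ys"
  by (simp add: poly_eval_def)

lemma poly_eval_smult [simp]: "poly_eval sc mu \<rho> (poly_smult c xs) = sc (of_int c) (poly_eval sc mu \<rho> xs)"
  by (induction xs) (auto simp: poly_smult_def V.scale_right_distrib)

lemma poly_eval_mon_mul [simp]: "poly_eval sc mu \<rho> (mon_mul a b) = mu (mon_eval mu \<rho> a) (mon_eval mu \<rho> b)"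
  using mu_anticomm[of "mon_eval mu \<rho> a" "mon_eval mu \<rho> b"] by (auto simp: mon_mul_def mu_self)

lemma poly_eval_concat [simp]: "poly_eval sc mu \<rho> (concat xss) = sum_list (map (poly_eval sc mu \<rho>) xss)"
  by (induction xss) auto

lemma poly_eval_mul [simp]: "poly_eval sc mu \<rho> (poly_mul xs ys) = mu (poly_eval sc mu \<rho> xs) (poly_eval sc mu \<rho> ys)"
proof (induction xs)
  case Nil
  then show ?case by simp
next
  case (Cons p xs)
  obtain c a where p: "p = (c, a)" by (cases p)
  have "poly_eval sc mu \<rho> (concat (map (\<lambda>(d, b). poly_smult (c * d) (mon_mul a b)) ys)) =
        mu (sc (of_int c) (mon_eval mu \<rho> a)) (poly_eval sc mu \<rho> ys)"
  proof (induction ys)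
    case Nil
    then show ?case by simp
  next
    case (Cons q ys)
    then show ?case by (cases q) (simp add: mu_add_right mu_scale_left mu_scale_right)
  qed
  then show ?case using Cons by (simp add: p mu_add_left)
qed

lemma poly_eval_insert_nonzero: "poly_eval sc mu \<rho> (poly_insert_nonzero p xs) = poly_eval sc mu \<rho> (p # xs)"
proof (induction p xs rule: poly_insert_nonzero.induct)
  case (1 p)
  then show ?case by (cases p) simp
next
  case (2 c t d s r)
  have merge: "sc (of_int c) (mon_eval mu \<rho> s) + sc (of_int d) (mon_eval mu \<rho> s) =
      sc (of_int (c + d)) (mon_eval mu \<rho> s)"
    by (simp add: V.scale_left_distrib)
  show ?case
  proof (cases "t = s \<or> mon_less t s")
    case True
    then show ?thesis by (auto simp: add.assoc[symmetric] merge simp del: of_int_add)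
  next
    case False
    then show ?thesis using 2 by (simp add: add.left_commute)
  qed
qed

lemma poly_eval_insert: "poly_eval sc mu \<rho> (poly_insert p xs) = poly_eval sc mu \<rho> (p # xs)"
  by (cases p) (simp add: poly_insert_def poly_eval_insert_nonzero)

lemma poly_eval_normalize: "poly_eval sc mu \<rho> (poly_normalize xs) = poly_eval sc mu \<rho> xs"
  by (induction xs) (auto simp: poly_normalize_def poly_eval_insert)

lemma poly_eval_var [simp]: "poly_eval sc mu \<rho> (poly_var i) = \<rho> i"
  by (simp add: poly_var_def)

lemma poly_eval_trip [simp]:
  "poly_eval sc mu \<rho> (poly_trip x y z) =
     trip sc mu (poly_eval sc mu \<rho> x) (poly_eval sc mu \<rho> y) (poly_eval sc mu \<rho> z)"
  by (simp add: poly_trip_def trip_def)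

lemma poly_eval_h:
  "poly_eval sc mu \<rho> (poly_h y z t x u) =
     hpoly sc mu (poly_eval sc mu \<rho> y) (poly_eval sc mu \<rho> z) (poly_eval sc mu \<rho> t)
       (poly_eval sc mu \<rho> x) (poly_eval sc mu \<rho> u)"
  by (simp add: poly_h_def hpoly_def)

lemma poly_eval_p:
  "poly_eval sc mu \<rho> (poly_p x y z t) =
     ppoly sc mu (poly_eval sc mu \<rho> x) (poly_eval sc mu \<rho> y) (poly_eval sc mu \<rho> z) (poly_eval sc mu \<rho> t)"
  by (simp add: poly_p_def ppoly_def)

lemma poly_eval_lincomb_zero:
  "\<forall>cp\<in>set xs. poly_eval sc mu \<rho> (snd cp) = 0 \<Longrightarrow> poly_eval sc mu \<rho> (poly_lincomb xs) = 0"
  by (induction xs) (auto simp: poly_lincomb_def)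

lemma ppoly_add_left: "ppoly sc mu (x1 + x2) y z t = ppoly sc mu x1 y z t + ppoly sc mu x2 y z t"
  by (simp add: ppoly_def trip_def mu_add_left mu_add_right V.scale_right_distrib algebra_simps)

lemma ppoly_scale_left: "ppoly sc mu (sc c x) y z t = sc c (ppoly sc mu x y z t)"
  by (simp add: ppoly_def trip_def mu_scale_left mu_scale_right V.scale_right_distrib
      V.scale_right_diff_distrib V.scale_left_commute[of 2 c] mult.commute)

lemma ppoly_minus_left: "ppoly sc mu (- x) y z t = - ppoly sc mu x y z t"
  using ppoly_scale_left[of "-1" x] by simp

lemma linear_alpha_op: "Vector_Spaces.linear sc sc (alpha_op sc mu y z t)"
  by (simp add: Vector_Spaces.linear_iff is_vector_space alpha_op_def ppoly_add_left ppoly_scale_left)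

lemma jac_add_left: "jac mu (x1 + x2) y z = jac mu x1 y z + jac mu x2 y z"
  by (simp add: jac_def mu_add_left mu_add_right algebra_simps)

lemma jac_add_middle: "jac mu x (y1 + y2) z = jac mu x y1 z + jac mu x y2 z"
  by (simp add: jac_def mu_add_left mu_add_right algebra_simps)

lemma jac_add_right: "jac mu x y (z1 + z2) = jac mu x y z1 + jac mu x y z2"
  by (simp add: jac_def mu_add_left mu_add_right algebra_simps)

lemma jac_scale_middle: "jac mu x (sc c y) z = sc c (jac mu x y z)"
  by (simp add: jac_def mu_scale_left mu_scale_right V.scale_right_distrib)

lemma jac_scale_right: "jac mu x y (sc c z) = sc c (jac mu x y z)"
  by (simp add: jac_def mu_scale_left mu_scale_right V.scale_right_distrib)

lemma jac_zero_middle [simp]: "jac mu x 0 z = 0"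
  by (simp add: jac_def)

lemma jac_zero_right [simp]: "jac mu x y 0 = 0"
  by (simp add: jac_def)

lemma centroid_linear: "\<delta> \<in> centroid sc mu \<Longrightarrow> Vector_Spaces.linear sc sc \<delta>"
  by (simp add: centroid_def)

lemma centroid_add: "\<delta> \<in> centroid sc mu \<Longrightarrow> \<delta> (a + b) = \<delta> a + \<delta> b"
  by (simp add: centroid_def Vector_Spaces.linear_iff)

lemma centroid_scale: "\<delta> \<in> centroid sc mu \<Longrightarrow> \<delta> (sc c a) = sc c (\<delta> a)"
  by (simp add: centroid_def Vector_Spaces.linear_iff)

lemma centroid_minus: "\<delta> \<in> centroid sc mu \<Longrightarrow> \<delta> (- a) = - \<delta> a"
  by (metis centroid_linear Vector_Spaces.linear_def module_hom.neg)

lemma centroid_diff: "\<delta> \<in> centroid sc mu \<Longrightarrow> \<delta> (a - b) = \<delta> a - \<delta> b"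
  by (metis centroid_linear Vector_Spaces.linear_def module_hom.diff)

lemma centroid_zero: "\<delta> \<in> centroid sc mu \<Longrightarrow> \<delta> 0 = 0"
  by (metis centroid_linear Vector_Spaces.linear_def module_hom.zero)

lemma centroid_mu_right: "\<delta> \<in> centroid sc mu \<Longrightarrow> mu a (\<delta> b) = \<delta> (mu a b)"
  unfolding centroid_def by (metis (mono_tags, lifting) mem_Collect_eq)

lemma centroid_mu_left: "\<delta> \<in> centroid sc mu \<Longrightarrow> mu (\<delta> a) b = \<delta> (mu a b)"
  unfolding centroid_def by (metis (mono_tags, lifting) mem_Collect_eq)

lemmas centroid_simps = centroid_add centroid_scale centroid_minus centroid_diff centroid_mu_right centroid_mu_left

lemma mu_centroid_apply:
  assumes "\<alpha> \<in> centroid sc mu" "\<beta> \<in> centroid sc mu"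
  shows "mu (\<alpha> a) (\<beta> b) = (\<beta> \<circ> \<alpha>) (mu a b)"
  using centroid_mu_right[OF assms(2), of "\<alpha> a" b] centroid_mu_left[OF assms(1), of a b] by simp

lemma jac_centroid_left: "\<delta> \<in> centroid sc mu \<Longrightarrow> jac mu (\<delta> x) y z = \<delta> (jac mu x y z)"
  by (simp add: jac_def centroid_simps)

lemma alpha_op_comp_centroid:
  assumes "\<delta> \<in> centroid sc mu"
  shows "alpha_op sc mu y z t \<circ> \<delta> = alpha_op sc mu (\<delta> y) z t"
    and "\<delta> \<circ> alpha_op sc mu y z t = alpha_op sc mu (\<delta> y) z t"
  using assms by (simp_all add: fun_eq_iff alpha_op_def ppoly_def trip_def centroid_simps)

lemma module_op_scale: "module (op_scale sc)"
  unfolding module_def op_scale_def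
  by (auto simp: fun_eq_iff V.scale_right_distrib V.scale_left_distrib)

sublocale O: module "op_scale sc"
  by (rule module_op_scale)

lemma centroid_subspace: "O.subspace (centroid sc mu)"
  unfolding O.subspace_def
proof (intro conjI ballI allI)
  show "0 \<in> centroid sc mu"
    by (simp add: centroid_def Vector_Spaces.linear_iff is_vector_space)
next
  fix \<delta> \<epsilon> assume \<delta>: "\<delta> \<in> centroid sc mu" and \<epsilon>: "\<epsilon> \<in> centroid sc mu"
  have "Vector_Spaces.linear sc sc (\<delta> + \<epsilon>)"
    using \<delta> \<epsilon> by (simp add: Vector_Spaces.linear_iff is_vector_space centroid_simps
        V.scale_right_distrib algebra_simps)
  then show "\<delta> + \<epsilon> \<in> centroid sc mu"
    using \<delta> \<epsilon> by (simp add: centroid_def mu_add_left mu_add_right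
        centroid_mu_right[OF \<delta>] centroid_mu_left[OF \<delta>] centroid_mu_right[OF \<epsilon>] centroid_mu_left[OF \<epsilon>])
next
  fix c \<delta> assume \<delta>: "\<delta> \<in> centroid sc mu"
  have "Vector_Spaces.linear sc sc (op_scale sc c \<delta>)"
    using \<delta> by (simp add: Vector_Spaces.linear_iff is_vector_space op_scale_def centroid_simps
        V.scale_right_distrib V.scale_left_commute)
  then show "op_scale sc c \<delta> \<in> centroid sc mu"
    using \<delta> by (simp add: centroid_def op_scale_def mu_scale_left mu_scale_right
        centroid_mu_right[OF \<delta>] centroid_mu_left[OF \<delta>])
qed

lemma U_ops_eq_span: "U_ops sc mu S = O.span {alpha_op sc mu m a b | m a b. a \<in> S \<and> b \<in> S}"
  by (simp add: U_ops_def)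

lemma centroid_comp_U_ops:
  assumes \<delta>: "\<delta> \<in> centroid sc mu" and u: "u \<in> U_ops sc mu S"
  shows "\<delta> \<circ> u \<in> U_ops sc mu S \<and> u \<circ> \<delta> = \<delta> \<circ> u"
  using u unfolding U_ops_eq_span
proof (induction rule: O.span_induct_alt)
  case base
  have "\<delta> \<circ> 0 = 0" and "0 \<circ> \<delta> = (0 :: 'm \<Rightarrow> 'm)"
    using centroid_zero[OF \<delta>] by (simp_all add: fun_eq_iff)
  then show ?case by (metis O.span_zero)
next
  case (step c x y)
  from step(1) obtain m a b where x: "x = alpha_op sc mu m a b" and ab: "a \<in> S" "b \<in> S"
    by blast
  have x_comm: "x \<circ> \<delta> = \<delta> \<circ> x"
    by (simp add: x alpha_op_comp_centroid[OF \<delta>])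
  have \<delta>x: "\<delta> \<circ> x \<in> O.span {alpha_op sc mu m a b | m a b. a \<in> S \<and> b \<in> S}"
    using ab by (auto simp: x alpha_op_comp_centroid[OF \<delta>] intro: O.span_base)
  have left: "\<delta> \<circ> (op_scale sc c x + y) = op_scale sc c (\<delta> \<circ> x) + (\<delta> \<circ> y)"
    by (rule ext) (simp add: op_scale_def centroid_add[OF \<delta>] centroid_scale[OF \<delta>])
  have right: "(op_scale sc c x + y) \<circ> \<delta> = op_scale sc c (x \<circ> \<delta>) + (y \<circ> \<delta>)"
    by (rule ext) (simp add: op_scale_def)
  show ?case
    unfolding left right x_comm step(2)[THEN conjunct2]
    using \<delta>x step(2) by (blast intro: O.span_add O.span_scale)
qed

end

locale malcev = anticomm_algebra +
  assumes malcev_identity: "\<And>x y z t. mu (mu x z) (mu y t) =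
     mu (mu (mu x y) z) t + mu (mu (mu y z) t) x + mu (mu (mu z t) x) y + mu (mu (mu t x) y) z"
begin

lemma poly_eval_malcev [simp]: "poly_eval sc mu \<rho> (poly_malcev x y z t) = 0"
  by (simp add: poly_malcev_def malcev_identity[of "poly_eval sc mu \<rho> x" "poly_eval sc mu \<rho> z"])

end

locale malcev_H = malcev +
  assumes h_identity: "\<And>y z t x u. hpoly sc mu y z t x u = 0"

lemma in_H_imp_malcev_H: "in_H sc mu \<Longrightarrow> malcev_H sc mu"
  unfolding in_H_def malcev_algebra_def bilinear_prod_def
  by unfold_locales (simp_all add: vector_space_def)

section \<open>The operators \<open>\<alpha>(y,z,t)\<close> lie in the centroid\<close>

definition centroid_certificate :: "(int \<times> poly) list" where
  "centroid_certificate = [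
    (-1, poly_mul (poly_malcev (poly_var 1) (poly_var 3) (poly_var 4) (poly_var 2)) (poly_var 0)),
    (1, poly_malcev (poly_mul (poly_var 0) (poly_var 4)) (poly_var 1) (poly_var 3) (poly_var 2)),
    (-1, poly_h (poly_var 0) (poly_var 1) (poly_var 2) (poly_var 3) (poly_var 4)),
    (1, poly_h (poly_var 0) (poly_var 3) (poly_var 1) (poly_var 2) (poly_var 4)),
    (-1, poly_h (poly_var 0) (poly_var 2) (poly_var 3) (poly_var 1) (poly_var 4)),
    (-2, poly_h (poly_var 0) (poly_var 1) (poly_var 4) (poly_var 2) (poly_var 3)),
    (-1, poly_malcev (poly_mul (poly_var 0) (poly_var 4)) (poly_var 3) (poly_var 1) (poly_var 2)),
    (-1, poly_malcev (poly_mul (poly_var 0) (poly_var 4)) (poly_var 2) (poly_var 1) (poly_var 3)),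
    (1, poly_malcev (poly_mul (poly_var 0) (poly_var 1)) (poly_var 2) (poly_var 4) (poly_var 3)),
    (3, poly_malcev (poly_mul (poly_var 0) (poly_var 2)) (poly_var 1) (poly_var 4) (poly_var 3)),
    (1, poly_malcev (poly_mul (poly_var 0) (poly_var 2)) (poly_var 3) (poly_var 1) (poly_var 4)),
    (-1, poly_mul (poly_malcev (poly_var 0) (poly_var 1) (poly_var 3) (poly_var 2)) (poly_var 4)),
    (-4, poly_mul (poly_malcev (poly_var 0) (poly_var 2) (poly_var 1) (poly_var 3)) (poly_var 4)),
    (-2, poly_mul (poly_malcev (poly_var 0) (poly_var 1) (poly_var 2) (poly_var 3)) (poly_var 4)),
    (-1, poly_malcev (poly_mul (poly_var 0) (poly_var 1)) (poly_var 3) (poly_var 4) (poly_var 2)),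
    (2, poly_malcev (poly_mul (poly_var 0) (poly_var 1)) (poly_var 3) (poly_var 2) (poly_var 4)),
    (2, poly_malcev (poly_mul (poly_var 0) (poly_var 3)) (poly_var 2) (poly_var 4) (poly_var 1)),
    (1, poly_malcev (poly_mul (poly_var 0) (poly_var 3)) (poly_var 4) (poly_var 1) (poly_var 2)),
    (1, poly_malcev (poly_mul (poly_var 0) (poly_var 3)) (poly_var 2) (poly_var 1) (poly_var 4)),
    (2, poly_malcev (poly_mul (poly_var 0) (poly_var 1)) (poly_var 2) (poly_var 3) (poly_var 4)),
    (-2, poly_mul (poly_malcev (poly_var 0) (poly_var 3) (poly_var 1) (poly_var 2)) (poly_var 4)),
    (-1, poly_h (poly_var 0) (poly_var 1) (poly_var 3) (poly_var 2) (poly_var 4)),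
    (-1, poly_malcev (poly_mul (poly_var 1) (poly_var 3)) (poly_var 2) (poly_var 0) (poly_var 4)),
    (2, poly_malcev (poly_mul (poly_var 0) (poly_var 2)) (poly_var 1) (poly_var 3) (poly_var 4)),
    (1, poly_malcev (poly_mul (poly_var 0) (poly_var 3)) (poly_var 1) (poly_var 2) (poly_var 4)),
    (-1, poly_malcev (poly_mul (poly_var 1) (poly_var 2)) (poly_var 3) (poly_var 0) (poly_var 4)),
    (1, poly_malcev (poly_mul (poly_var 1) (poly_var 2)) (poly_var 0) (poly_var 3) (poly_var 4)),
    (-2, poly_mul (poly_malcev (poly_var 0) (poly_var 2) (poly_var 1) (poly_var 4)) (poly_var 3)),
    (-1, poly_malcev (poly_mul (poly_var 1) (poly_var 3)) (poly_var 0) (poly_var 4) (poly_var 2)),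
    (2, poly_malcev (poly_mul (poly_var 1) (poly_var 3)) (poly_var 0) (poly_var 2) (poly_var 4)),
    (2, poly_malcev (poly_mul (poly_var 1) (poly_var 4)) (poly_var 0) (poly_var 3) (poly_var 2)),
    (3, poly_malcev (poly_mul (poly_var 1) (poly_var 4)) (poly_var 0) (poly_var 2) (poly_var 3)),
    (-2, poly_mul (poly_malcev (poly_var 0) (poly_var 3) (poly_var 1) (poly_var 4)) (poly_var 2)),
    (-2, poly_malcev (poly_mul (poly_var 1) (poly_var 3)) (poly_var 2) (poly_var 4) (poly_var 0)),
    (1, poly_malcev (poly_mul (poly_var 1) (poly_var 4)) (poly_var 2) (poly_var 0) (poly_var 3)),
    (1, poly_malcev (poly_mul (poly_var 1) (poly_var 4)) (poly_var 3) (poly_var 0) (poly_var 2)),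
    (-1, poly_h (poly_var 1) (poly_var 3) (poly_var 0) (poly_var 2) (poly_var 4)),
    (-2, poly_mul (poly_malcev (poly_var 1) (poly_var 2) (poly_var 4) (poly_var 3)) (poly_var 0)),
    (-1, poly_mul (poly_malcev (poly_var 1) (poly_var 3) (poly_var 2) (poly_var 4)) (poly_var 0)),
    (-1, poly_mul (poly_malcev (poly_var 1) (poly_var 2) (poly_var 3) (poly_var 4)) (poly_var 0)),
    (1, poly_malcev (poly_mul (poly_var 0) (poly_var 2)) (poly_var 4) (poly_var 1) (poly_var 3)),
    (-1, poly_malcev (poly_mul (poly_var 1) (poly_var 3)) (poly_var 4) (poly_var 0) (poly_var 2)),
    (-1, poly_malcev (poly_mul (poly_var 1) (poly_var 2)) (poly_var 4) (poly_var 0) (poly_var 3)),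
    (-2, poly_malcev (poly_mul (poly_var 2) (poly_var 4)) (poly_var 1) (poly_var 0) (poly_var 3)),
    (2, poly_mul (poly_malcev (poly_var 0) (poly_var 2) (poly_var 4) (poly_var 1)) (poly_var 3)),
    (1, poly_h (poly_var 1) (poly_var 2) (poly_var 3) (poly_var 0) (poly_var 4)),
    (-1, poly_h (poly_var 2) (poly_var 3) (poly_var 0) (poly_var 1) (poly_var 4)),
    (4, poly_malcev (poly_mul (poly_var 0) (poly_var 3)) (poly_var 1) (poly_var 4) (poly_var 2)),
    (2, poly_mul (poly_malcev (poly_var 0) (poly_var 1) (poly_var 4) (poly_var 3)) (poly_var 2)),
    (2, poly_mul (poly_malcev (poly_var 0) (poly_var 1) (poly_var 3) (poly_var 4)) (poly_var 2)),
    (2, poly_mul (poly_malcev (poly_var 0) (poly_var 1) (poly_var 4) (poly_var 2)) (poly_var 3)),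
    (-1, poly_mul (poly_malcev (poly_var 0) (poly_var 4) (poly_var 2) (poly_var 3)) (poly_var 1)),
    (1, poly_mul (poly_malcev (poly_var 0) (poly_var 2) (poly_var 4) (poly_var 3)) (poly_var 1)),
    (1, poly_mul (poly_malcev (poly_var 0) (poly_var 2) (poly_var 3) (poly_var 4)) (poly_var 1)),
    (2, poly_malcev (poly_mul (poly_var 2) (poly_var 4)) (poly_var 0) (poly_var 1) (poly_var 3)),
    (1, poly_mul (poly_malcev (poly_var 0) (poly_var 2) (poly_var 3) (poly_var 1)) (poly_var 4))]"


definition centroid_target :: poly where
  "centroid_target = poly_p (poly_mul (poly_var 0) (poly_var 1)) (poly_var 2) (poly_var 3) (poly_var 4)
     @ poly_smult (-1) (poly_mul (poly_var 0) (poly_p (poly_var 1) (poly_var 2) (poly_var 3) (poly_var 4)))"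

lemma centroid_certificate_normalizes:
  "poly_normalize (poly_lincomb centroid_certificate @ poly_smult (-1) centroid_target) = []"
  by code_simp

context malcev_H
begin

lemma ppoly_mu_left: "ppoly sc mu (mu x u) y z t = mu x (ppoly sc mu u y z t)"
proof -
  define \<rho> where "\<rho> = (\<lambda>i. [x, u, y, z, t] ! i)"
  have "poly_eval sc mu \<rho> (poly_lincomb centroid_certificate) = 0"
    by (rule poly_eval_lincomb_zero) (simp add: centroid_certificate_def poly_eval_h h_identity)
  moreover have "poly_eval sc mu \<rho> (poly_lincomb centroid_certificate @ poly_smult (-1) centroid_target) = 0"
    by (metis centroid_certificate_normalizes poly_eval_Nil poly_eval_normalize)
  ultimately have "poly_eval sc mu \<rho> centroid_target = 0"
    by simp
  then show ?thesis
    by (simp add: centroid_target_def poly_eval_p \<rho>_def)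
qed

lemma alpha_op_in_centroid: "alpha_op sc mu y z t \<in> centroid sc mu"
proof -
  let ?\<alpha> = "alpha_op sc mu y z t"
  have left: "?\<alpha> (mu x u) = mu x (?\<alpha> u)" for x u
    by (simp add: alpha_op_def ppoly_mu_left)
  have "?\<alpha> (mu x u) = mu (?\<alpha> x) u" for x u
  proof -
    have "?\<alpha> (mu x u) = ?\<alpha> (- mu u x)" by (simp flip: mu_anticomm)
    also have "\<dots> = - mu u (?\<alpha> x)" by (simp add: alpha_op_def ppoly_minus_left ppoly_mu_left)
    also have "\<dots> = mu (?\<alpha> x) u" by (simp flip: mu_anticomm)
    finally show ?thesis .
  qed
  then show ?thesis
    using left linear_alpha_op by (simp add: centroid_def)
qed

lemma U_ops_subset_centroid: "U_ops sc mu S \<subseteq> centroid sc mu"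
  unfolding U_ops_eq_span by (rule O.span_minimal) (auto simp: centroid_subspace alpha_op_in_centroid)

end

section \<open>Elements of \<open>N_M\<close> are combinations of values of \<open>\<alpha>(y,z,t)\<close>\<close>

text \<open>An element of \<open>L \<oplus> M\<close> is stored as its coordinates in the basis \<open>e = 2E, h = H, f = F\<close>
  of \<open>L\<close>, whose structure constants \<open>eh = e, ef = h, hf = f\<close> are integers, together with a
  \<open>poly\<close> for the \<open>M\<close>-component in which \<open>Var 1, Var 2, Var 3\<close> stand for \<open>e, h, f\<close>.
  \<open>lm_mul\<close> is the true product only when one of the factors lies in \<open>L\<close>.\<close>

type_synonym lvec = "int \<times> int \<times> int"
type_synonym lm = "lvec \<times> poly"

fun lvec_mul :: "lvec \<Rightarrow> lvec \<Rightarrow> lvec" where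
  "lvec_mul (a1, a2, a3) (b1, b2, b3) = (a1 * b2 - a2 * b1, a1 * b3 - a3 * b1, a2 * b3 - a3 * b2)"

fun lvec_add :: "lvec \<Rightarrow> lvec \<Rightarrow> lvec" where
  "lvec_add (a1, a2, a3) (b1, b2, b3) = (a1 + b1, a2 + b2, a3 + b3)"

fun lvec_smult :: "int \<Rightarrow> lvec \<Rightarrow> lvec" where
  "lvec_smult k (a1, a2, a3) = (k * a1, k * a2, k * a3)"

fun poly_mul_lvec :: "poly \<Rightarrow> lvec \<Rightarrow> poly" where
  "poly_mul_lvec xs (b1, b2, b3) = map (\<lambda>(c, t). (c * b1, Mul t (Var 1))) xs
     @ map (\<lambda>(c, t). (c * b2, Mul t (Var 2))) xs @ map (\<lambda>(c, t). (c * b3, Mul t (Var 3))) xs"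

fun lm_mul :: "lm \<Rightarrow> lm \<Rightarrow> lm" where
  "lm_mul (l1, x1) (l2, x2) = (lvec_mul l1 l2, poly_mul_lvec x1 l2 @ poly_smult (-1) (poly_mul_lvec x2 l1))"

fun lm_add :: "lm \<Rightarrow> lm \<Rightarrow> lm" where
  "lm_add (l1, x1) (l2, x2) = (lvec_add l1 l2, x1 @ x2)"

fun lm_smult :: "int \<Rightarrow> lm \<Rightarrow> lm" where
  "lm_smult k (l, x) = (lvec_smult k l, poly_smult k x)"

definition lm_zero :: lm where
  "lm_zero = ((0, 0, 0), [])"

definition lm_var :: lm where
  "lm_var = ((0, 0, 0), [(1, Var 0)])"

fun lm_basis :: "nat \<Rightarrow> lm" where
  "lm_basis (Suc 0) = ((1, 0, 0), [])"
| "lm_basis (Suc (Suc 0)) = ((0, 1, 0), [])"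
| "lm_basis _ = ((0, 0, 1), [])"

definition lm_lincomb :: "(int \<times> lm) list \<Rightarrow> lm" where
  "lm_lincomb xs = foldr (\<lambda>(k, x) acc. lm_add (lm_smult k x) acc) xs lm_zero"

definition lm_normalize :: "lm \<Rightarrow> lm" where
  "lm_normalize x = (fst x, poly_normalize (snd x))"

definition lm_trip :: "lm \<Rightarrow> lm \<Rightarrow> lm \<Rightarrow> lm" where
  "lm_trip x y z = lm_add (lm_mul (lm_mul x y) z)
     (lm_add (lm_smult (-1) (lm_mul (lm_mul x z) y)) (lm_smult 2 (lm_mul x (lm_mul y z))))"

definition lm_jac :: "lm \<Rightarrow> lm \<Rightarrow> lm \<Rightarrow> lm" where
  "lm_jac x y z = lm_add (lm_mul (lm_mul x y) z) (lm_add (lm_mul (lm_mul y z) x) (lm_mul (lm_mul z x) y))"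

definition lm_malcev :: "lm \<Rightarrow> lm \<Rightarrow> lm \<Rightarrow> lm \<Rightarrow> lm" where
  "lm_malcev x y z t = lm_add (lm_mul (lm_mul x z) (lm_mul y t)) (lm_smult (-1)
     (lm_add (lm_mul (lm_mul (lm_mul x y) z) t) (lm_add (lm_mul (lm_mul (lm_mul y z) t) x)
       (lm_add (lm_mul (lm_mul (lm_mul z t) x) y) (lm_mul (lm_mul (lm_mul t x) y) z)))))"

definition lm_h :: "lm \<Rightarrow> lm \<Rightarrow> lm \<Rightarrow> lm \<Rightarrow> lm \<Rightarrow> lm" where
  "lm_h y z t x u = lm_add (lm_mul (lm_trip (lm_mul y z) t u) x) (lm_add (lm_mul (lm_trip (lm_mul y z) t x) u)
     (lm_add (lm_mul (lm_trip (lm_mul y x) z u) t) (lm_mul (lm_trip (lm_mul y u) z x) t)))"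

definition lm_p :: "lm \<Rightarrow> lm \<Rightarrow> lm \<Rightarrow> lm \<Rightarrow> lm" where
  "lm_p x y z t = lm_add (lm_smult (-1) (lm_trip (lm_mul z t) x y))
     (lm_add (lm_smult (-1) (lm_trip (lm_mul y t) z x)) (lm_trip (lm_mul x t) y z))"

definition N_combination :: lm where
  "N_combination = lm_lincomb [
    (2, lm_p (lm_basis 1) lm_var (lm_basis 3) (lm_basis 2)),
    (1, lm_p (lm_basis 1) lm_var (lm_basis 2) (lm_basis 3)),
    (-4, lm_p (lm_basis 2) lm_var (lm_basis 1) (lm_basis 3)),
    (-1, lm_p (lm_basis 3) lm_var (lm_basis 1) (lm_basis 2)),
    (-5, lm_p (lm_basis 2) lm_var (lm_basis 3) (lm_basis 1))]"

definition N_target :: "nat \<Rightarrow> lm" where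
  "N_target d = lm_mul (lm_add (lm_smult 6 lm_var) (lm_smult (-1) N_combination)) (lm_basis d)"

definition N_relations_1 :: "(int \<times> lm) list" where
  "N_relations_1 = [
    (1, lm_h lm_var (lm_basis 1) (lm_basis 1) (lm_basis 2) (lm_basis 3)),
    (-10, lm_malcev lm_var (lm_basis 1) (lm_basis 1) (lm_basis 3)),
    (-2, lm_malcev (lm_mul lm_var (lm_basis 3)) (lm_basis 1) (lm_basis 2) (lm_basis 1)),
    (12, lm_malcev lm_var (lm_basis 1) (lm_basis 2) (lm_basis 2)),
    (-4, lm_mul (lm_malcev lm_var (lm_basis 1) (lm_basis 2) (lm_basis 1)) (lm_basis 3)),
    (6, lm_malcev (lm_mul lm_var (lm_basis 3)) (lm_basis 1) (lm_basis 1) (lm_basis 2)),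
    (10, lm_mul (lm_malcev lm_var (lm_basis 1) (lm_basis 3) (lm_basis 1)) (lm_basis 2)),
    (4, lm_malcev (lm_mul lm_var (lm_basis 2)) (lm_basis 1) (lm_basis 1) (lm_basis 3)),
    (12, lm_malcev (lm_mul lm_var (lm_basis 2)) (lm_basis 1) (lm_basis 3) (lm_basis 1)),
    (14, lm_malcev lm_var (lm_basis 2) (lm_basis 1) (lm_basis 2)),
    (-2, lm_jac lm_var (lm_basis 1) (lm_basis 2)),
    (-6, lm_malcev lm_var (lm_basis 1) (lm_basis 3) (lm_basis 1)),
    (-3, lm_h lm_var (lm_basis 1) (lm_basis 2) (lm_basis 1) (lm_basis 3)),
    (8, lm_mul (lm_malcev lm_var (lm_basis 1) (lm_basis 3) (lm_basis 2)) (lm_basis 1)),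
    (-8, lm_mul (lm_malcev lm_var (lm_basis 1) (lm_basis 2) (lm_basis 3)) (lm_basis 1)),
    (8, lm_mul (lm_malcev lm_var (lm_basis 1) (lm_basis 1) (lm_basis 3)) (lm_basis 2)),
    (8, lm_malcev (lm_mul lm_var (lm_basis 1)) (lm_basis 1) (lm_basis 2) (lm_basis 3)),
    (-8, lm_mul (lm_malcev lm_var (lm_basis 1) (lm_basis 1) (lm_basis 2)) (lm_basis 3))]"

definition N_relations_2 :: "(int \<times> lm) list" where
  "N_relations_2 = [
    (-4, lm_malcev lm_var (lm_basis 1) (lm_basis 3) (lm_basis 2)),
    (6, lm_mul (lm_malcev lm_var (lm_basis 2) (lm_basis 1) (lm_basis 3)) (lm_basis 2)),
    (6, lm_mul (lm_malcev lm_var (lm_basis 1) (lm_basis 3) (lm_basis 2)) (lm_basis 2)),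
    (-6, lm_mul (lm_malcev lm_var (lm_basis 1) (lm_basis 2) (lm_basis 3)) (lm_basis 2)),
    (1, lm_h lm_var (lm_basis 1) (lm_basis 1) (lm_basis 3) (lm_basis 3)),
    (-2, lm_mul (lm_malcev lm_var (lm_basis 1) (lm_basis 3) (lm_basis 1)) (lm_basis 3)),
    (4, lm_malcev lm_var (lm_basis 1) (lm_basis 2) (lm_basis 3)),
    (-2, lm_malcev (lm_mul lm_var (lm_basis 3)) (lm_basis 1) (lm_basis 2) (lm_basis 2)),
    (2, lm_malcev (lm_mul lm_var (lm_basis 3)) (lm_basis 1) (lm_basis 3) (lm_basis 1)),
    (2, lm_malcev (lm_mul lm_var (lm_basis 3)) (lm_basis 1) (lm_basis 1) (lm_basis 3)),
    (-2, lm_malcev lm_var (lm_basis 2) (lm_basis 1) (lm_basis 3)),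
    (-2, lm_mul (lm_malcev lm_var (lm_basis 2) (lm_basis 1) (lm_basis 2)) (lm_basis 3)),
    (2, lm_malcev (lm_mul lm_var (lm_basis 2)) (lm_basis 1) (lm_basis 2) (lm_basis 3)),
    (2, lm_malcev lm_var (lm_basis 2) (lm_basis 3) (lm_basis 1)),
    (2, lm_malcev (lm_mul lm_var (lm_basis 2)) (lm_basis 1) (lm_basis 3) (lm_basis 2)),
    (-2, lm_jac lm_var (lm_basis 1) (lm_basis 3)),
    (-1, lm_h lm_var (lm_basis 1) (lm_basis 2) (lm_basis 2) (lm_basis 3))]"

definition N_relations_3 :: "(int \<times> lm) list" where
  "N_relations_3 = [
    (4, lm_malcev lm_var (lm_basis 1) (lm_basis 3) (lm_basis 3)),
    (-6, lm_malcev lm_var (lm_basis 2) (lm_basis 2) (lm_basis 3)),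
    (-2, lm_malcev lm_var (lm_basis 3) (lm_basis 1) (lm_basis 3)),
    (1, lm_h lm_var (lm_basis 1) (lm_basis 2) (lm_basis 3) (lm_basis 3)),
    (2, lm_malcev (lm_mul lm_var (lm_basis 3)) (lm_basis 1) (lm_basis 3) (lm_basis 2)),
    (2, lm_malcev (lm_mul lm_var (lm_basis 3)) (lm_basis 1) (lm_basis 2) (lm_basis 3)),
    (-3, lm_h lm_var (lm_basis 1) (lm_basis 3) (lm_basis 2) (lm_basis 3)),
    (2, lm_mul (lm_jac lm_var (lm_basis 1) (lm_basis 3)) (lm_basis 3))]"

lemma N_certificate_1:
  "lm_normalize (lm_add (N_target 1) (lm_smult (-1) (lm_lincomb N_relations_1))) = lm_zero"
  by code_simp

lemma N_certificate_2:
  "lm_normalize (lm_add (N_target 2) (lm_smult (-1) (lm_lincomb N_relations_2))) = lm_zero"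
  by code_simp

lemma N_certificate_3:
  "lm_normalize (lm_add (N_target 3) (lm_smult (-1) (lm_lincomb N_relations_3))) = lm_zero"
  by code_simp

text \<open>\<open>\<rho> 0\<close> is the element of \<open>M\<close> under study and \<open>\<rho> 1, \<rho> 2, \<rho> 3\<close> are \<open>e, h, f\<close>.\<close>

locale sl2_valuation = malcev_H sc mu for sc :: "'f::field \<Rightarrow> 'm::ab_group_add \<Rightarrow> 'm" and mu +
  fixes \<rho> :: "nat \<Rightarrow> 'm"
  assumes e_h: "mu (\<rho> 1) (\<rho> 2) = \<rho> 1"
    and f_h: "mu (\<rho> 3) (\<rho> 2) = - \<rho> 3"
    and e_f: "mu (\<rho> 1) (\<rho> 3) = \<rho> 2"
begin

lemma sl2_table:
  "mu (\<rho> (Suc 0)) (\<rho> 2) = \<rho> (Suc 0)" "mu (\<rho> 2) (\<rho> (Suc 0)) = - \<rho> (Suc 0)"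
  "mu (\<rho> (Suc 0)) (\<rho> 3) = \<rho> 2" "mu (\<rho> 3) (\<rho> (Suc 0)) = - \<rho> 2"
  "mu (\<rho> 2) (\<rho> 3) = \<rho> 3" "mu (\<rho> 3) (\<rho> 2) = - \<rho> 3"
proof -
  have "mu (\<rho> 2) (\<rho> 1) = - \<rho> 1" "mu (\<rho> 3) (\<rho> 1) = - \<rho> 2" "mu (\<rho> 2) (\<rho> 3) = \<rho> 3"
    using mu_anticomm e_h e_f f_h by (metis, metis, metis minus_minus)
  then show "mu (\<rho> (Suc 0)) (\<rho> 2) = \<rho> (Suc 0)" "mu (\<rho> 2) (\<rho> (Suc 0)) = - \<rho> (Suc 0)"
    "mu (\<rho> (Suc 0)) (\<rho> 3) = \<rho> 2" "mu (\<rho> 3) (\<rho> (Suc 0)) = - \<rho> 2"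
    "mu (\<rho> 2) (\<rho> 3) = \<rho> 3" "mu (\<rho> 3) (\<rho> 2) = - \<rho> 3"
    using e_h e_f f_h by simp_all
qed

fun lvec_eval :: "lvec \<Rightarrow> 'm" where
  "lvec_eval (a, b, c) = sc (of_int a) (\<rho> 1) + sc (of_int b) (\<rho> 2) + sc (of_int c) (\<rho> 3)"

definition lm_eval :: "lm \<Rightarrow> 'm" where
  "lm_eval x = lvec_eval (fst x) + poly_eval sc mu \<rho> (snd x)"

lemma lvec_eval_mul: "mu (lvec_eval l1) (lvec_eval l2) = lvec_eval (lvec_mul l1 l2)"
  by (cases l1; cases l2)
    (simp add: mu_add_left mu_add_right mu_scale_left mu_scale_right mu_self sl2_table
      algebra_simps of_int_mult of_int_diff)

lemma poly_eval_mul_lvec: "poly_eval sc mu \<rho> (poly_mul_lvec x l) = mu (poly_eval sc mu \<rho> x) (lvec_eval l)"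
proof (induction x)
  case Nil
  then show ?case by (cases l) simp
next
  case (Cons p x)
  then show ?case
    by (cases l; cases p) (simp add: mu_add_left mu_add_right mu_scale_left mu_scale_right algebra_simps of_int_mult)
qed

lemma lm_eval_mul: "snd x = [] \<or> snd y = [] \<Longrightarrow> lm_eval (lm_mul x y) = mu (lm_eval x) (lm_eval y)"
proof -
  assume pure: "snd x = [] \<or> snd y = []"
  obtain l1 x1 where x: "x = (l1, x1)" by (cases x)
  obtain l2 x2 where y: "y = (l2, x2)" by (cases y)
  have "mu (lvec_eval l1) (poly_eval sc mu \<rho> x2) = - mu (poly_eval sc mu \<rho> x2) (lvec_eval l1)"
    by (rule mu_anticomm)
  then show ?thesis
    using pure by (auto simp: x y lm_eval_def lvec_eval_mul poly_eval_mul_lvec mu_add_left mu_add_right)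
qed

lemmas lm_eval_mul_pure = lm_eval_mul[OF disjI1] lm_eval_mul[OF disjI2]

lemma snd_lm_mul: "snd (lm_mul x y) = poly_mul_lvec (snd x) (fst y) @ poly_smult (-1) (poly_mul_lvec (snd y) (fst x))"
  by (cases x; cases y) simp

lemma snd_lm_add: "snd (lm_add x y) = snd x @ snd y"
  by (cases x; cases y) simp

lemma pure_lm_mul [simp]: "snd x = [] \<Longrightarrow> snd y = [] \<Longrightarrow> snd (lm_mul x y) = []"
  by (cases "fst x"; cases "fst y") (simp add: snd_lm_mul poly_smult_def)

lemma pure_lm_add [simp]: "snd x = [] \<Longrightarrow> snd y = [] \<Longrightarrow> snd (lm_add x y) = []"
  by (simp add: snd_lm_add)

lemma pure_lm_smult [simp]: "snd x = [] \<Longrightarrow> snd (lm_smult k x) = []"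
  by (cases x) (simp add: poly_smult_def)

lemma pure_lm_basis [simp]: "snd (lm_basis i) = []"
  by (cases i rule: lm_basis.cases) auto

lemma lm_eval_add [simp]: "lm_eval (lm_add x y) = lm_eval x + lm_eval y"
  by (cases x; cases y; cases "fst x"; cases "fst y") (simp add: lm_eval_def V.scale_left_distrib algebra_simps)

lemma lm_eval_smult [simp]: "lm_eval (lm_smult k x) = sc (of_int k) (lm_eval x)"
  by (cases x; cases "fst x") (simp add: lm_eval_def V.scale_right_distrib algebra_simps)

lemma lm_eval_zero [simp]: "lm_eval lm_zero = 0"
  by (simp add: lm_eval_def lm_zero_def)

lemma lm_eval_var [simp]: "lm_eval lm_var = \<rho> 0"
  by (simp add: lm_eval_def lm_var_def)

lemma lm_eval_basis [simp]:
  "lm_eval (lm_basis 1) = \<rho> 1" "lm_eval (lm_basis (Suc 0)) = \<rho> (Suc 0)"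
  "lm_eval (lm_basis 2) = \<rho> 2" "lm_eval (lm_basis 3) = \<rho> 3"
  by (simp_all add: lm_eval_def numeral_2_eq_2 numeral_3_eq_3)

lemma lm_eval_normalize: "lm_eval (lm_normalize x) = lm_eval x"
  by (simp add: lm_eval_def lm_normalize_def poly_eval_normalize)

lemma lm_eval_trip:
  "snd y = [] \<and> snd z = [] \<or> snd x = [] \<and> snd z = [] \<or> snd x = [] \<and> snd y = [] \<Longrightarrow>
    lm_eval (lm_trip x y z) = trip sc mu (lm_eval x) (lm_eval y) (lm_eval z)"
  by (auto simp: lm_trip_def trip_def lm_eval_mul_pure)

lemma lm_eval_jac:
  "snd y = [] \<Longrightarrow> snd z = [] \<Longrightarrow> lm_eval (lm_jac x y z) = jac mu (lm_eval x) (lm_eval y) (lm_eval z)"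
  by (simp add: lm_jac_def jac_def lm_eval_mul_pure)

lemma lm_eval_malcev: "snd y = [] \<Longrightarrow> snd z = [] \<Longrightarrow> snd t = [] \<Longrightarrow> lm_eval (lm_malcev x y z t) = 0"
  by (simp add: lm_malcev_def lm_eval_mul_pure malcev_identity[of "lm_eval x" "lm_eval z"])

lemma lm_eval_h:
  "snd z = [] \<Longrightarrow> snd t = [] \<Longrightarrow> snd x = [] \<Longrightarrow> snd u = [] \<Longrightarrow> lm_eval (lm_h y z t x u) = 0"
  using h_identity[of "lm_eval y" "lm_eval z" "lm_eval t" "lm_eval x" "lm_eval u"]
  by (simp add: lm_h_def hpoly_def lm_eval_mul_pure lm_eval_trip add.assoc)

lemma lm_eval_p:
  "snd x = [] \<Longrightarrow> snd z = [] \<Longrightarrow> snd t = [] \<Longrightarrow>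
    lm_eval (lm_p x y z t) = ppoly sc mu (lm_eval x) (lm_eval y) (lm_eval z) (lm_eval t)"
  by (simp add: lm_p_def ppoly_def lm_eval_mul_pure lm_eval_trip)

lemma lm_eval_lincomb_zero:
  "\<forall>kx\<in>set xs. lm_eval (snd kx) = 0 \<Longrightarrow> lm_eval (lm_lincomb xs) = 0"
  by (induction xs) (auto simp: lm_lincomb_def simp del: lm_smult.simps)

lemma lm_eval_N_combination:
  "lm_eval N_combination =
     sc 2 (ppoly sc mu (\<rho> 1) (\<rho> 0) (\<rho> 3) (\<rho> 2)) + ppoly sc mu (\<rho> 1) (\<rho> 0) (\<rho> 2) (\<rho> 3)
     - sc 4 (ppoly sc mu (\<rho> 2) (\<rho> 0) (\<rho> 1) (\<rho> 3)) - ppoly sc mu (\<rho> 3) (\<rho> 0) (\<rho> 1) (\<rho> 2)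
     - sc 5 (ppoly sc mu (\<rho> 2) (\<rho> 0) (\<rho> 3) (\<rho> 1))"
  by (simp add: N_combination_def lm_lincomb_def lm_eval_p algebra_simps del: lm_basis.simps lm_smult.simps)

lemma N_certificate:
  assumes jac: "\<And>a b. a \<in> {1, 2, 3} \<Longrightarrow> b \<in> {1, 2, 3} \<Longrightarrow> jac mu (\<rho> 0) (\<rho> a) (\<rho> b) = 0"
    and i: "i \<in> {1, 2, 3}"
  shows "mu (sc 6 (\<rho> 0) - lm_eval N_combination) (\<rho> i) = 0"
proof -
  have jac_lm: "lm_eval (lm_jac lm_var (lm_basis a) (lm_basis b)) = 0"
    if "a \<in> {1, 2, 3}" "b \<in> {1, 2, 3}" for a b
    using jac[OF that] that by (auto simp: lm_eval_jac simp del: lm_basis.simps)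
  have relations: "lm_eval (lm_lincomb N_relations_1) = 0" "lm_eval (lm_lincomb N_relations_2) = 0"
    "lm_eval (lm_lincomb N_relations_3) = 0"
    by (rule lm_eval_lincomb_zero, simp add: N_relations_1_def N_relations_2_def N_relations_3_def
        lm_eval_mul_pure lm_eval_malcev lm_eval_h jac_lm del: lm_basis.simps)+
  have by_certificate: "lm_eval x = 0"
    if "lm_normalize (lm_add x (lm_smult (-1) y)) = lm_zero" "lm_eval y = 0" for x y
    using that lm_eval_normalize[of "lm_add x (lm_smult (-1) y)"] by simp
  have "lm_eval (N_target d) = mu (sc 6 (\<rho> 0) - lm_eval N_combination) (lm_eval (lm_basis d))" for d
    by (simp add: N_target_def lm_eval_mul_pure del: lm_basis.simps)
  then show ?thesis
    using i by_certificate[OF N_certificate_1 relations(1)] by_certificate[OF N_certificate_2 relations(2)]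
      by_certificate[OF N_certificate_3 relations(3)]
    by (auto simp del: lm_basis.simps)
qed

end

section \<open>\<open>N_M\<close> is \<open>L \<otimes> U\<close>\<close>

locale sl2_faithful = malcev_H sc mu for sc :: "'f::field \<Rightarrow> 'm::ab_group_add \<Rightarrow> 'm" and mu +
  fixes E H F :: 'm
  assumes two_nonzero: "(2::'f) \<noteq> 0" and three_nonzero: "(3::'f) \<noteq> 0"
    and E_H: "mu E H = E" and F_H: "mu F H = - F" and E_F: "mu E F = sc (1/2) H"
    and faithful: "\<And>m. m \<noteq> 0 \<Longrightarrow> \<exists>a\<in>sl2_span sc E H F. mu m a \<noteq> 0"
begin

abbreviation L :: "'m set" where
  "L \<equiv> sl2_span sc E H F"

abbreviation U :: "('m \<Rightarrow> 'm) set" where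
  "U \<equiv> U_ops sc mu L"

lemma H_E: "mu H E = - E"
  using mu_anticomm E_H by metis

lemma H_F: "mu H F = F"
  using mu_anticomm F_H by (metis minus_minus)

lemma F_E: "mu F E = - sc (1/2) H"
  using mu_anticomm E_F by metis

lemma basis_in_L: "E \<in> L" "H \<in> L" "F \<in> L" "sc 2 E \<in> L"
  by (auto simp: sl2_span_def intro: V.span_base V.span_scale)

lemma L_induct [consumes 1, case_names zero add]:
  "a \<in> L \<Longrightarrow> Q 0 \<Longrightarrow> (\<And>c x y. x \<in> {E, H, F} \<Longrightarrow> Q y \<Longrightarrow> Q (sc c x + y)) \<Longrightarrow> Q a"
  unfolding sl2_span_def by (induction rule: V.span_induct_alt) auto

lemma eq_0_if_annihilates_basis: "mu w E = 0 \<Longrightarrow> mu w H = 0 \<Longrightarrow> mu w F = 0 \<Longrightarrow> w = 0"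
proof (rule ccontr)
  assume ann: "mu w E = 0" "mu w H = 0" "mu w F = 0" and "w \<noteq> 0"
  then obtain b where b: "b \<in> L" "mu w b \<noteq> 0"
    using faithful by blast
  have "mu w b = 0"
    using b(1) by (induction rule: L_induct) (use ann in \<open>auto simp: mu_add_right mu_scale_right\<close>)
  then show False
    using b(2) by simp
qed

lemma centroid_eq_0_if_basis:
  assumes \<delta>: "\<delta> \<in> centroid sc mu" and "\<delta> E = 0" "\<delta> H = 0" "\<delta> F = 0"
  shows "\<delta> = 0"
proof
  fix m
  have "mu (\<delta> m) x = 0" if "x \<in> {E, H, F}" for x
    using that assms by (auto simp: centroid_mu_left[OF \<delta>] simp flip: centroid_mu_right[OF \<delta>])
  then show "\<delta> m = 0 m"
    by (simp add: eq_0_if_annihilates_basis)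
qed

lemma centroid_eq_0_if_E:
  assumes \<delta>: "\<delta> \<in> centroid sc mu" and E: "\<delta> E = 0"
  shows "\<delta> = 0"
proof -
  have H_eq: "H = sc 2 (mu E F)" and F_eq: "F = - mu F H"
    using two_nonzero by (simp_all add: E_F F_H)
  have H: "\<delta> H = 0"
    by (subst H_eq) (simp add: centroid_scale[OF \<delta>] E flip: centroid_mu_left[OF \<delta>])
  have "\<delta> F = 0"
    by (subst F_eq) (simp add: centroid_minus[OF \<delta>] H flip: centroid_mu_right[OF \<delta>])
  then show ?thesis
    using centroid_eq_0_if_basis[OF \<delta> E H] by blast
qed

lemma centroid_eq_0_if_H:
  assumes \<delta>: "\<delta> \<in> centroid sc mu" and H: "\<delta> H = 0"
  shows "\<delta> = 0"
proof -
  have "\<delta> E = \<delta> (mu E H)" by (simp add: E_H)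
  also have "\<dots> = 0" by (simp add: H flip: centroid_mu_right[OF \<delta>])
  finally show ?thesis
    using centroid_eq_0_if_E[OF \<delta>] by blast
qed

lemma centroid_eq_0_if_F:
  assumes \<delta>: "\<delta> \<in> centroid sc mu" and F: "\<delta> F = 0"
  shows "\<delta> = 0"
proof -
  have "H = sc 2 (mu E F)"
    using two_nonzero by (simp add: E_F)
  then have "\<delta> H = 0"
    by (simp add: centroid_scale[OF \<delta>] F flip: centroid_mu_right[OF \<delta>])
  then show ?thesis
    using centroid_eq_0_if_H[OF \<delta>] by blast
qed

text \<open>The three summands are eigenvectors of right multiplication by \<open>H\<close> with eigenvalues
  \<open>1, 0, -1\<close>.\<close>

lemma centroid_basis_independent:
  assumes \<alpha>: "\<alpha> \<in> centroid sc mu" and \<beta>: "\<beta> \<in> centroid sc mu" and \<gamma>: "\<gamma> \<in> centroid sc mu"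
    and sum: "\<alpha> E + \<beta> H + \<gamma> F = 0"
  shows "\<alpha> = 0 \<and> \<beta> = 0 \<and> \<gamma> = 0"
proof -
  have "mu (\<alpha> E) H = \<alpha> E" "mu (\<beta> H) H = 0" "mu (\<gamma> F) H = - \<gamma> F"
    by (simp_all add: centroid_mu_left \<alpha> \<beta> \<gamma> E_H F_H mu_self centroid_zero centroid_minus)
  then have "\<alpha> E - \<gamma> F = 0" and "\<alpha> E + \<gamma> F = 0"
    using arg_cong[OF sum, of "\<lambda>w. mu w H"] arg_cong[OF sum, of "\<lambda>w. mu (mu w H) H"]
    by (simp_all add: mu_add_left)
  then have "sc 2 (\<alpha> E) = 0" and \<gamma>F: "\<gamma> F = \<alpha> E"
    by (simp_all add: V.scale_left_distrib[of 1 1, simplified])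
  then have \<alpha>E: "\<alpha> E = 0"
    using two_nonzero by simp
  then have "\<beta> H = 0"
    using sum \<gamma>F by simp
  then show ?thesis
    using \<alpha>E \<gamma>F centroid_eq_0_if_E[OF \<alpha>] centroid_eq_0_if_H[OF \<beta>] centroid_eq_0_if_F[OF \<gamma>] by simp
qed

lemma jac_basis: "x \<in> {E, H, F} \<Longrightarrow> y \<in> {E, H, F} \<Longrightarrow> z \<in> {E, H, F} \<Longrightarrow> jac mu x y z = 0"
  by (auto simp: jac_def E_H F_H E_F H_E H_F F_E mu_self mu_scale_left mu_scale_right)

lemma jac_basis_L: "x \<in> {E, H, F} \<Longrightarrow> a \<in> L \<Longrightarrow> b \<in> L \<Longrightarrow> jac mu x a b = 0"
proof -
  assume x: "x \<in> {E, H, F}" and a: "a \<in> L" and b: "b \<in> L"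
  have basis_b: "jac mu x y b = 0" if "y \<in> {E, H, F}" for y
    using b by (induction rule: L_induct) (use x that in \<open>auto simp: jac_add_right jac_scale_right jac_basis\<close>)
  show ?thesis
    using a by (induction rule: L_induct) (auto simp: jac_add_middle jac_scale_middle basis_b)
qed

lemma centroid_combination_in_N:
  assumes "\<alpha> \<in> centroid sc mu" "\<beta> \<in> centroid sc mu" "\<gamma> \<in> centroid sc mu"
  shows "\<alpha> E + \<beta> H + \<gamma> F \<in> N_M sc mu L"
  using assms by (auto simp: N_M_def jac_add_left jac_centroid_left jac_basis_L centroid_zero)

lemma six_times_N:
  assumes n: "n \<in> N_M sc mu L"
  shows "sc 6 n = sc 2 (ppoly sc mu (sc 2 E) n F H) + ppoly sc mu (sc 2 E) n H F
     - sc 4 (ppoly sc mu H n (sc 2 E) F) - ppoly sc mu F n (sc 2 E) H - sc 5 (ppoly sc mu H n F (sc 2 E))"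
    (is "_ = ?X")
proof -
  define \<rho> where "\<rho> i = (if i = 0 then n else if i = 1 then sc 2 E else if i = 2 then H else F)" for i :: nat
  have \<rho>: "\<rho> 0 = n" "\<rho> 1 = sc 2 E" "\<rho> (Suc 0) = sc 2 E" "\<rho> 2 = H" "\<rho> 3 = F"
    by (simp_all add: \<rho>_def)
  have valuation: "sl2_valuation sc mu \<rho>"
    by unfold_locales (use two_nonzero in \<open>simp_all add: \<rho> mu_scale_left E_H F_H E_F\<close>)
  have jac: "jac mu (\<rho> 0) (\<rho> a) (\<rho> b) = 0" if "a \<in> {1, 2, 3}" "b \<in> {1, 2, 3}" for a b
    using n that basis_in_L by (auto simp: N_M_def \<rho>)
  define w where "w = sc 6 n - ?X"
  have "mu w (\<rho> i) = 0" if "i \<in> {1, 2, 3}" for i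
    using sl2_valuation.N_certificate[OF valuation jac that]
    unfolding w_def sl2_valuation.lm_eval_N_combination[OF valuation] \<rho>(1,2,4,5) .
  then have "mu w (sc 2 E) = 0" "mu w H = 0" "mu w F = 0"
    unfolding \<rho>(2,4,5)[symmetric] by blast+
  then have "w = 0"
    using two_nonzero by - (rule eq_0_if_annihilates_basis; simp add: mu_scale_right)
  then show ?thesis
    unfolding w_def right_minus_eq .
qed

lemma U_subspace: "O.subspace U"
  by (simp add: U_ops_eq_span)

definition tensor_map :: "('m \<Rightarrow> 'm) \<times> ('m \<Rightarrow> 'm) \<times> ('m \<Rightarrow> 'm) \<Rightarrow> 'm" where
  "tensor_map = (\<lambda>(\<alpha>, \<beta>, \<gamma>). \<alpha> E + \<beta> H + \<gamma> F)"

abbreviation LU :: "'m set" where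
  "LU \<equiv> tensor_map ` (U \<times> U \<times> U)"

lemma tensor_map_in_LU: "\<alpha> \<in> U \<Longrightarrow> \<beta> \<in> U \<Longrightarrow> \<gamma> \<in> U \<Longrightarrow> \<alpha> E + \<beta> H + \<gamma> F \<in> LU"
  by (rule image_eqI[where x = "(\<alpha>, \<beta>, \<gamma>)"]) (auto simp: tensor_map_def)

lemma LU_subspace: "V.subspace LU"
  unfolding V.subspace_def
proof (intro conjI ballI allI)
  show "0 \<in> LU"
    using tensor_map_in_LU[OF O.subspace_0 O.subspace_0 O.subspace_0, OF U_subspace U_subspace U_subspace]
    by simp
next
  fix x y assume "x \<in> LU" "y \<in> LU"
  then obtain \<alpha> \<beta> \<gamma> \<alpha>' \<beta>' \<gamma>' where U: "\<alpha> \<in> U" "\<beta> \<in> U" "\<gamma> \<in> U" "\<alpha>' \<in> U" "\<beta>' \<in> U" "\<gamma>' \<in> U"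
    and "x = \<alpha> E + \<beta> H + \<gamma> F" "y = \<alpha>' E + \<beta>' H + \<gamma>' F"
    by (auto simp: tensor_map_def)
  then have sum: "x + y = (\<alpha> + \<alpha>') E + (\<beta> + \<beta>') H + (\<gamma> + \<gamma>') F"
    by (simp add: algebra_simps)
  show "x + y \<in> LU"
    unfolding sum by (intro tensor_map_in_LU O.subspace_add[OF U_subspace] U)
next
  fix c x assume "x \<in> LU"
  then obtain \<alpha> \<beta> \<gamma> where U: "\<alpha> \<in> U" "\<beta> \<in> U" "\<gamma> \<in> U" and "x = \<alpha> E + \<beta> H + \<gamma> F"
    by (auto simp: tensor_map_def)
  then have scaled: "sc c x = op_scale sc c \<alpha> E + op_scale sc c \<beta> H + op_scale sc c \<gamma> F"
    by (simp add: op_scale_def V.scale_right_distrib)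
  show "sc c x \<in> LU"
    unfolding scaled by (intro tensor_map_in_LU O.subspace_scale[OF U_subspace] U)
qed

lemma U_apply_L_in_LU:
  assumes \<alpha>: "\<alpha> \<in> U" and a: "a \<in> L"
  shows "\<alpha> a \<in> LU"
  using a
proof (induction rule: L_induct)
  case zero
  have "\<alpha> 0 = 0"
    using \<alpha> U_ops_subset_centroid centroid_zero by blast
  then show ?case
    by (simp only:) (rule V.subspace_0[OF LU_subspace])
next
  case (add c x y)
  have 0: "0 \<in> U"
    by (rule O.subspace_0[OF U_subspace])
  have "\<alpha> E \<in> LU" "\<alpha> H \<in> LU" "\<alpha> F \<in> LU"
    using tensor_map_in_LU[OF \<alpha> 0 0] tensor_map_in_LU[OF 0 \<alpha> 0] tensor_map_in_LU[OF 0 0 \<alpha>] by simp_all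
  then have "\<alpha> x \<in> LU"
    using add.hyps by blast
  moreover have "\<alpha> \<in> centroid sc mu"
    using \<alpha> U_ops_subset_centroid by blast
  ultimately show ?case
    using add.IH by (simp add: centroid_add centroid_scale V.subspace_add V.subspace_scale LU_subspace)
qed

lemma N_subset_LU: "N_M sc mu L \<subseteq> LU"
proof
  fix n assume n: "n \<in> N_M sc mu L"
  have p: "ppoly sc mu x n z t \<in> LU" if "x \<in> L" "z \<in> L" "t \<in> L" for x z t
  proof -
    have "alpha_op sc mu n z t \<in> U"
      using that by (auto simp: U_ops_eq_span intro: O.span_base)
    then show ?thesis
      using U_apply_L_in_LU that by (simp add: alpha_op_def)
  qed
  have "sc 6 n \<in> LU"
    unfolding six_times_N[OF n]
    by (intro V.subspace_add V.subspace_diff V.subspace_scale LU_subspace p basis_in_L)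
  then have "sc (1/6) (sc 6 n) \<in> LU"
    by (rule V.subspace_scale[OF LU_subspace])
  moreover have "(6::'f) \<noteq> 0"
    using two_nonzero three_nonzero mult_eq_0_iff[of "2::'f" 3] by simp
  ultimately show "n \<in> LU"
    by (simp add: V.scale_scale)
qed

lemma bij_betw_tensor_map: "bij_betw tensor_map (U \<times> U \<times> U) (N_M sc mu L)"
proof (rule bij_betw_imageI)
  show "inj_on tensor_map (U \<times> U \<times> U)"
  proof (rule inj_onI)
    fix x y assume "x \<in> U \<times> U \<times> U" "y \<in> U \<times> U \<times> U" and eq: "tensor_map x = tensor_map y"
    then obtain \<alpha> \<beta> \<gamma> \<alpha>' \<beta>' \<gamma>' where x: "x = (\<alpha>, \<beta>, \<gamma>)" and y: "y = (\<alpha>', \<beta>', \<gamma>')"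
      and U: "\<alpha> \<in> U" "\<beta> \<in> U" "\<gamma> \<in> U" "\<alpha>' \<in> U" "\<beta>' \<in> U" "\<gamma>' \<in> U"
      by auto
    have "\<alpha> - \<alpha>' \<in> centroid sc mu" "\<beta> - \<beta>' \<in> centroid sc mu" "\<gamma> - \<gamma>' \<in> centroid sc mu"
      using U O.subspace_diff[OF U_subspace] U_ops_subset_centroid by blast+
    moreover have "(\<alpha> - \<alpha>') E + (\<beta> - \<beta>') H + (\<gamma> - \<gamma>') F = 0"
      using eq by (simp add: x y tensor_map_def algebra_simps)
    ultimately show "x = y"
      using centroid_basis_independent by (fastforce simp: x y)
  qed
  show "LU = N_M sc mu L"
    using N_subset_LU U_ops_subset_centroid by (auto simp: tensor_map_def intro!: centroid_combination_in_N)
qed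

end

theorem propositionc1:
  fixes sc :: "'f::field \<Rightarrow> 'm::ab_group_add \<Rightarrow> 'm"
    and mu :: "'m \<Rightarrow> 'm \<Rightarrow> 'm"
    and E H F :: 'm
  assumes char2: "(2::'f) \<noteq> 0" and char3: "(3::'f) \<noteq> 0"
    and HM: "in_H sc mu"
    and sl2: "sl2_triple sc mu E H F"
    and faithful: "\<And>m. m \<noteq> 0 \<Longrightarrow> \<exists>a\<in>sl2_span sc E H F. mu m a \<noteq> 0"
  shows
    \<comment> \<open>U is a commutative associative subalgebra of the centroid (product = composition)\<close>
    "U_ops sc mu (sl2_span sc E H F) \<subseteq> centroid sc mu
     \<and> (\<forall>\<alpha>\<in>U_ops sc mu (sl2_span sc E H F). \<forall>\<beta>\<in>U_ops sc mu (sl2_span sc E H F).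
          \<beta> \<circ> \<alpha> \<in> U_ops sc mu (sl2_span sc E H F) \<and> \<beta> \<circ> \<alpha> = \<alpha> \<circ> \<beta>)
     \<and> (\<forall>\<alpha>\<in>U_ops sc mu (sl2_span sc E H F). \<forall>\<beta>\<in>U_ops sc mu (sl2_span sc E H F).
        \<forall>\<gamma>\<in>U_ops sc mu (sl2_span sc E H F). \<gamma> \<circ> (\<beta> \<circ> \<alpha>) = (\<gamma> \<circ> \<beta>) \<circ> \<alpha>)
     \<comment> \<open>the map L \<otimes> U \<rightarrow> N_M, written in the coordinates E\<otimes>\<alpha> + H\<otimes>\<beta> + F\<otimes>\<gamma>, is bijective\<close>
     \<and> bij_betw (\<lambda>(\<alpha>, \<beta>, \<gamma>). \<alpha> E + \<beta> H + \<gamma> F)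
          (U_ops sc mu (sl2_span sc E H F) \<times> U_ops sc mu (sl2_span sc E H F) \<times> U_ops sc mu (sl2_span sc E H F))
          (N_M sc mu (sl2_span sc E H F))
     \<comment> \<open>and multiplicative on pure tensors: (a\<alpha>)(b\<beta>) = (ab)(\<alpha>\<beta>)\<close>
     \<and> (\<forall>a\<in>sl2_span sc E H F. \<forall>b\<in>sl2_span sc E H F.
          \<forall>\<alpha>\<in>U_ops sc mu (sl2_span sc E H F). \<forall>\<beta>\<in>U_ops sc mu (sl2_span sc E H F).
            mu (\<alpha> a) (\<beta> b) = (\<beta> \<circ> \<alpha>) (mu a b))"
proof -
  have "sl2_faithful sc mu E H F"
    using in_H_imp_malcev_H[OF HM] sl2 char2 char3 faithful
    unfolding sl2_faithful_def sl2_faithful_axioms_def sl2_triple_def by blast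
  then interpret sl2_faithful sc mu E H F .
  have centroid: "U \<subseteq> centroid sc mu"
    by (rule U_ops_subset_centroid)
  have "\<forall>\<alpha>\<in>U. \<forall>\<beta>\<in>U. \<beta> \<circ> \<alpha> \<in> U \<and> \<beta> \<circ> \<alpha> = \<alpha> \<circ> \<beta>"
    using centroid_comp_U_ops centroid by fastforce
  moreover have "\<forall>\<alpha>\<in>U. \<forall>\<beta>\<in>U. \<forall>\<gamma>\<in>U. \<gamma> \<circ> (\<beta> \<circ> \<alpha>) = (\<gamma> \<circ> \<beta>) \<circ> \<alpha>"
    by (simp add: comp_assoc)
  moreover have "\<forall>a\<in>L. \<forall>b\<in>L. \<forall>\<alpha>\<in>U. \<forall>\<beta>\<in>U. mu (\<alpha> a) (\<beta> b) = (\<beta> \<circ> \<alpha>) (mu a b)"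
    using mu_centroid_apply centroid by blast
  ultimately show ?thesis
    using centroid bij_betw_tensor_map unfolding tensor_map_def by blast
qed

end
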